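(* Let $H$, $L$ be as in the context and let $(S,\mathcal T_0)$ be a feasible solution, with associated layers $\mathcal T_0,\dots,\mathcal T_{L-1}$. Let $k$ be an integer with $1\le k\le L-1$, and let $H^{(S,k)}=H+\phi^{S}(H)+\phi^{2S}(H)+\cdots+\phi^{(k-1)S}(H)$ (sum of integer matrices). Then $d(S,\mathcal T_0)\ge k$ if and only if $H^{(S,k)}_{\mathcal T_0}$ is a binary matrix (all entries in $\{0,1\}$) and $\omega\big(H^{(S,k)}_{\mathcal T_0}\big)=1$.
   Context: Notation: for a nonnegative integer $n$, $[n)=\{0,1,\dots,n-1\}$. Let $M,N,Z$ be positive integers and let $H$ be a binary $MZ\times NZ$ matrix made of $M\times N$ blocks $H_{m,n}$ ($m\in[M)$, $n\in[N)$), each of which is a $Z\times Z$ circulant (row $i$ of the block is the cyclic right shift by $i$ of its row $0$). Assume $H$ has no zero row and no two identical rows. Rows of $H$ are indexed by $[MZ)$, columns by $[NZ)$. For a vector $x=(x_0,\dots,x_{Z-1})$ and an integer $s$, $\lambda^s(x)=(x_{(-s)\bmod Z},x_{(1-s)\bmod Z},\dots,x_{(Z-1-s)\bmod Z})$. For a row vector $y$ of length $NZ$ split into $N$ consecutive pieces $y^{(0)},\dots,y^{(N-1)}$ of length $Z$, $\phi^s(y)=(\lambda^s(y^{(0)}),\dots,\lambda^s(y^{(N-1)}))$; for a matrix $A$ with $NZ$ columns, $\phi^s(A)$ applies $\phi^s$ to every row. For an ordered subset $\mathcal A\subseteq[MZ)$, $A_{\mathcal A}$ denotes the matrix formed, in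 order, by the rows of a matrix $A$ with indices in $\mathcal A$. For a matrix $A$, $\omega_j(A)$ is the Hamming weight of column $j$ and $\omega(A)=\max_j\omega_j(A)$ (with $\omega$ of the empty matrix equal to $0$). Fix an integer $L>1$. A feasible solution is a pair $(S,\mathcal T_0)$ with $S$ a positive integer and $\mathcal T_0$ an ordered subset of $[MZ)$ such that there exist ordered subsets $\mathcal T_1,\dots,\mathcal T_{L-1}$ of $[MZ)$ with $\mathcal T_0,\dots,\mathcal T_{L-1}$ pairwise disjoint, $\bigcup_{l\in[L)}\mathcal T_l=[MZ)$, and $H_{\mathcal T_l}=\phi^{lS}(H_{\mathcal T_0})$ for all $l\in[L)$. The layer distance $d(S,\mathcal T_0)$ is the largest $l\in[L)$ such that the matrix obtained by stacking $H_{\mathcal T_0},H_{\mathcal T_1},\dots,H_{\mathcal T_{l-1}}$ vertically has maximum column weight at most $1$ (for $l=0$ the stack is empty with weight $0$). *)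

theory Defs
  imports Main
begin

text \<open>Matrices are functions nat => nat => int (row index, column index);
  the dimensions are carried separately.\<close>

definition qc_matrix :: "nat \<Rightarrow> nat \<Rightarrow> nat \<Rightarrow> (nat \<Rightarrow> nat \<Rightarrow> int) \<Rightarrow> bool" where
  "qc_matrix M N Z H \<longleftrightarrow>
     (\<forall>i<M*Z. \<forall>j<N*Z. H i j \<in> {0,1}) \<and>
     (\<forall>m<M. \<forall>n<N. \<forall>i<Z. \<forall>j<Z.
        H (m*Z+i) (n*Z+j) = H (m*Z) (n*Z + nat ((int j - int i) mod int Z))) \<and>
     (\<forall>i<M*Z. \<exists>j<N*Z. H i j \<noteq> 0) \<and>
     (\<forall>i<M*Z. \<forall>i'<M*Z. i \<noteq> i' \<longrightarrow> (\<exists>j<N*Z. H i j \<noteq> H i' j))"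

definition phi :: "nat \<Rightarrow> int \<Rightarrow> (nat \<Rightarrow> nat \<Rightarrow> int) \<Rightarrow> (nat \<Rightarrow> nat \<Rightarrow> int)" where
  "phi Z s A = (\<lambda>i c. A i ((c div Z) * Z + nat ((int (c mod Z) - s) mod int Z)))"

definition rows_sub :: "(nat \<Rightarrow> nat \<Rightarrow> int) \<Rightarrow> nat list \<Rightarrow> (nat \<Rightarrow> nat \<Rightarrow> int)" where
  "rows_sub A xs = (\<lambda>r c. A (xs ! r) c)"

definition col_weight :: "(nat \<Rightarrow> nat \<Rightarrow> int) \<Rightarrow> nat \<Rightarrow> nat \<Rightarrow> nat" where
  "col_weight A nr j = card {i. i < nr \<and> A i j \<noteq> 0}"

definition omega :: "(nat \<Rightarrow> nat \<Rightarrow> int) \<Rightarrow> nat \<Rightarrow> nat \<Rightarrow> nat" where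
  "omega A nr nc = Max ({0} \<union> {col_weight A nr j | j. j < nc})"

definition ordered_subset :: "nat \<Rightarrow> nat list \<Rightarrow> bool" where
  "ordered_subset n xs \<longleftrightarrow> distinct xs \<and> set xs \<subseteq> {..<n}"

definition is_layers :: "nat \<Rightarrow> nat \<Rightarrow> nat \<Rightarrow> nat \<Rightarrow> (nat \<Rightarrow> nat \<Rightarrow> int) \<Rightarrow> nat \<Rightarrow> nat list
    \<Rightarrow> (nat \<Rightarrow> nat list) \<Rightarrow> bool" where
  "is_layers M N Z L H S T0 T \<longleftrightarrow>
     T 0 = T0 \<and>
     (\<forall>l<L. ordered_subset (M*Z) (T l)) \<and>
     (\<forall>l<L. \<forall>l'<L. l \<noteq> l' \<longrightarrow> set (T l) \<inter> set (T l') = {}) \<and>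
     (\<Union>l<L. set (T l)) = {..<M*Z} \<and>
     (\<forall>l<L. length (T l) = length T0 \<and>
        (\<forall>r<length T0. \<forall>c<N*Z.
           rows_sub H (T l) r c = phi Z (int (l*S)) (rows_sub H T0) r c))"

definition feasible :: "nat \<Rightarrow> nat \<Rightarrow> nat \<Rightarrow> nat \<Rightarrow> (nat \<Rightarrow> nat \<Rightarrow> int) \<Rightarrow> nat \<Rightarrow> nat list \<Rightarrow> bool" where
  "feasible M N Z L H S T0 \<longleftrightarrow> 0 < S \<and> ordered_subset (M*Z) T0 \<and> (\<exists>T. is_layers M N Z L H S T0 T)"

text \<open>Layer distance: largest l < L such that the vertical stack of H_{T_0},...,H_{T_(l-1)}
  has max column weight at most 1.  The layers are those associated with (S, T0)
  (unique, since H has no two identical rows).\<close>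
definition layer_distance :: "nat \<Rightarrow> nat \<Rightarrow> nat \<Rightarrow> nat \<Rightarrow> (nat \<Rightarrow> nat \<Rightarrow> int) \<Rightarrow> nat \<Rightarrow> nat list \<Rightarrow> nat" where
  "layer_distance M N Z L H S T0 =
     (let T = (SOME T. is_layers M N Z L H S T0 T) in
      GREATEST l. l < L \<and>
        omega (rows_sub H (concat (map T [0..<l]))) (length (concat (map T [0..<l]))) (N*Z) \<le> 1)"

definition Hsum :: "nat \<Rightarrow> (nat \<Rightarrow> nat \<Rightarrow> int) \<Rightarrow> nat \<Rightarrow> nat \<Rightarrow> (nat \<Rightarrow> nat \<Rightarrow> int)" where
  "Hsum Z H S k = (\<lambda>i c. \<Sum>t<k. phi Z (int (t*S)) H i c)"

end

theory Submission
  imports Defs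
begin

(* Row r of layer t is row r of H_T0 shifted by tS, so column c of H^(S,k)_T0 adds up the
   entries in column c of the first k layers; as H is binary, the column sums of H^(S,k)_T0 are
   the column weights of the stack of these layers.  Stack weights only grow with the number of
   stacked layers, so d(S,T0) >= k iff every column sum of the nonnegative integer matrix
   H^(S,k)_T0 is at most 1, i.e. iff it is binary with column weights at most 1.  The maximal
   weight is not 0 because the first row of H_T0 is not zero. *)

lemma omega_le_iff: "omega A nr nc \<le> m \<longleftrightarrow> (\<forall>j<nc. col_weight A nr j \<le> m)"
  unfolding omega_def by (subst Max_le_iff) auto

lemma omega_ge_one_iff: "1 \<le> omega A nr nc \<longleftrightarrow> (\<exists>j<nc. 1 \<le> col_weight A nr j)"
  unfolding omega_def by (subst Max_ge_iff) auto

lemma card_nonzero_eq_sum: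
  fixes f :: "'a \<Rightarrow> int"
  assumes "finite X" and "\<forall>x\<in>X. f x \<in> {0,1}"
  shows "int (card {x\<in>X. f x \<noteq> 0}) = sum f X"
proof -
  have "sum f X = sum f {x\<in>X. f x \<noteq> 0}"
    using assms(1) by (intro sum.mono_neutral_right) auto
  also have "\<dots> = sum (\<lambda>_. 1) {x\<in>X. f x \<noteq> 0}"
    using assms(2) by (intro sum.cong) auto
  finally show ?thesis by simp
qed

lemma col_weight_binary:
  assumes "\<forall>i<nr. A i j \<in> {0,1}"
  shows "int (col_weight A nr j) = (\<Sum>i<nr. A i j)"
  using card_nonzero_eq_sum[of "{..<nr}" "\<lambda>i. A i j"] assms
  unfolding col_weight_def by (simp add: conj_commute)

lemma col_weight_rows_sub:
  "col_weight (rows_sub A xs) (length xs) c = length (filter (\<lambda>i. A i c \<noteq> 0) xs)"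
  unfolding col_weight_def rows_sub_def length_filter_conv_card by simp

abbreviation stack :: "(nat \<Rightarrow> 'a list) \<Rightarrow> nat \<Rightarrow> 'a list" where
  "stack T l \<equiv> concat (map T [0..<l])"

lemma col_weight_stack:
  "col_weight (rows_sub A (stack T l)) (length (stack T l)) c =
     (\<Sum>t<l. col_weight (rows_sub A (T t)) (length (T t)) c)"
  unfolding col_weight_rows_sub by (induction l) auto

lemma col_weight_stack_mono:
  assumes "l' \<le> l"
  shows "col_weight (rows_sub A (stack T l')) (length (stack T l')) c
    \<le> col_weight (rows_sub A (stack T l)) (length (stack T l)) c"
  unfolding col_weight_stack using assms by (intro sum_mono2) auto

lemma le_Greatest_iff_downward_closed:
  fixes k L :: nat
  assumes "P 0" and "\<And>l l'. P l \<Longrightarrow> l' \<le> l \<Longrightarrow> P l'" and "k < L"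
  shows "k \<le> (GREATEST l. l < L \<and> P l) \<longleftrightarrow> P k"
proof
  have "(GREATEST l. l < L \<and> P l) < L \<and> P (GREATEST l. l < L \<and> P l)"
    by (rule GreatestI_nat[of _ 0 L]) (use assms in auto)
  then show "k \<le> (GREATEST l. l < L \<and> P l) \<Longrightarrow> P k"
    using assms(2) by blast
  show "P k \<Longrightarrow> k \<le> (GREATEST l. l < L \<and> P l)"
    by (rule Greatest_le_nat[of _ k L]) (use assms(3) in auto)
qed

lemma le_Greatest_stack_weight_iff:
  fixes k L :: nat
  assumes "k < L"
  shows "k \<le> (GREATEST l. l < L \<and> omega (rows_sub A (stack T l)) (length (stack T l)) nc \<le> 1)
    \<longleftrightarrow> omega (rows_sub A (stack T k)) (length (stack T k)) nc \<le> 1"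
proof (rule le_Greatest_iff_downward_closed)
  show "omega (rows_sub A (stack T 0)) (length (stack T 0)) nc \<le> 1"
    unfolding omega_le_iff col_weight_def by simp
  show "omega (rows_sub A (stack T l')) (length (stack T l')) nc \<le> 1"
    if "omega (rows_sub A (stack T l)) (length (stack T l)) nc \<le> 1" "l' \<le> l" for l l'
    using that col_weight_stack_mono order_trans unfolding omega_le_iff by blast
qed (fact assms)

lemma column_sums_le_one_iff_binary_omega_one:
  fixes V :: "nat \<Rightarrow> nat \<Rightarrow> int"
  assumes nonneg: "\<And>r c. r < n \<Longrightarrow> c < nc \<Longrightarrow> 0 \<le> V r c"
    and nonzero: "r0 < n" "c0 < nc" "V r0 c0 \<noteq> 0"
  shows "(\<forall>c<nc. (\<Sum>r<n. V r c) \<le> 1) \<longleftrightarrow>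
    (\<forall>r<n. \<forall>c<nc. V r c \<in> {0,1}) \<and> omega V n nc = 1"
proof
  assume sums: "\<forall>c<nc. (\<Sum>r<n. V r c) \<le> 1"
  have binary: "\<forall>r<n. \<forall>c<nc. V r c \<in> {0,1}"
  proof (intro allI impI)
    fix r c assume "r < n" "c < nc"
    then have "V r c \<le> (\<Sum>r<n. V r c)"
      using nonneg by (intro member_le_sum) auto
    then show "V r c \<in> {0,1}"
      using sums nonneg \<open>r < n\<close> \<open>c < nc\<close> by force
  qed
  then have weight: "\<And>c. c < nc \<Longrightarrow> int (col_weight V n c) = (\<Sum>r<n. V r c)"
    by (simp add: col_weight_binary)
  have "omega V n nc \<le> 1"
    unfolding omega_le_iff using weight sums by fastforce
  moreover have "1 \<le> omega V n nc"
  proof -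
    have "V r0 c0 \<le> (\<Sum>r<n. V r c0)"
      using nonneg nonzero by (intro member_le_sum) auto
    then show ?thesis
      unfolding omega_ge_one_iff using weight nonzero nonneg[of r0 c0] by force
  qed
  ultimately show "(\<forall>r<n. \<forall>c<nc. V r c \<in> {0,1}) \<and> omega V n nc = 1"
    using binary by simp
next
  assume "(\<forall>r<n. \<forall>c<nc. V r c \<in> {0,1}) \<and> omega V n nc = 1"
  then show "\<forall>c<nc. (\<Sum>r<n. V r c) \<le> 1"
    using col_weight_binary omega_le_iff by (metis of_nat_1 of_nat_le_iff order_refl)
qed

locale qc_layers =
  fixes M N Z L :: nat and H :: "nat \<Rightarrow> nat \<Rightarrow> int" and S :: nat and T0 :: "nat list"
    and T :: "nat \<Rightarrow> nat list"
  assumes qc: "qc_matrix M N Z H"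
    and layers: "is_layers M N Z L H S T0 T"
begin

lemma first_layer: "T 0 = T0"
  using layers unfolding is_layers_def by simp

lemma layer_length: "t < L \<Longrightarrow> length (T t) = length T0"
  using layers unfolding is_layers_def by simp

lemma layer_subset: "t < L \<Longrightarrow> set (T t) \<subseteq> {..<M*Z}"
  using layers unfolding is_layers_def ordered_subset_def by simp

lemma layer_rows_eq_shift:
  assumes "t < L" "r < length T0" "c < N*Z"
  shows "H (T t ! r) c = phi Z (int (t*S)) H (T0 ! r) c"
  using layers assms unfolding is_layers_def rows_sub_def phi_def by simp

lemma layer_rows_binary:
  assumes "t < L" "r < length T0" "c < N*Z"
  shows "H (T t ! r) c \<in> {0,1}"
proof -
  have "T t ! r \<in> set (T t)"
    using assms layer_length by simp
  then have "T t ! r < M*Z"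
    using layer_subset \<open>t < L\<close> by blast
  then show ?thesis
    using qc \<open>c < N*Z\<close> unfolding qc_matrix_def by blast
qed

lemma layer_rows_nonneg: "t < L \<Longrightarrow> r < length T0 \<Longrightarrow> c < N*Z \<Longrightarrow> 0 \<le> H (T t ! r) c"
  using layer_rows_binary by fastforce

lemma T0_nonempty:
  assumes "0 < M" "0 < Z"
  shows "T0 \<noteq> []"
proof
  assume "T0 = []"
  then have "(\<Union>l<L. set (T l)) = {}"
    using layer_length by auto
  moreover have "(\<Union>l<L. set (T l)) = {..<M*Z}"
    using layers unfolding is_layers_def by simp
  moreover have "0 \<in> {..<M*Z}"
    using assms by simp
  ultimately show False
    by blast
qed

lemma rows_sub_Hsum_eq_layer_sum:
  assumes "k \<le> L" "r < length T0" "c < N*Z"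
  shows "rows_sub (Hsum Z H S k) T0 r c = (\<Sum>t<k. H (T t ! r) c)"
  unfolding rows_sub_def Hsum_def using assms layer_rows_eq_shift by simp

lemma rows_sub_Hsum_nonneg:
  assumes "k \<le> L" "r < length T0" "c < N*Z"
  shows "0 \<le> rows_sub (Hsum Z H S k) T0 r c"
  using assms layer_rows_nonneg
  by (simp add: rows_sub_Hsum_eq_layer_sum) (rule sum_nonneg, simp)

lemma rows_sub_Hsum_first_row_nonzero:
  assumes "0 < M" "0 < Z" "1 \<le> k" "k \<le> L"
  obtains j where "j < N*Z" "rows_sub (Hsum Z H S k) T0 0 j \<noteq> 0"
proof -
  have T0: "0 < length T0"
    using T0_nonempty assms by simp
  then have "T0 ! 0 < M*Z"
    using layer_subset[of 0] first_layer nth_mem assms by fastforce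
  then obtain j where j: "j < N*Z" "H (T0 ! 0) j \<noteq> 0"
    using qc unfolding qc_matrix_def by blast
  have "H (T 0 ! 0) j \<le> (\<Sum>t<k. H (T t ! 0) j)"
  proof (rule member_le_sum[where f = "\<lambda>t. H (T t ! 0) j"])
    show "0 \<le> H (T t ! 0) j" if "t \<in> {..<k} - {0}" for t
      using that assms T0 j layer_rows_nonneg by simp
  qed (use assms in auto)
  moreover have "0 \<le> H (T0 ! 0) j"
    using layer_rows_nonneg[of 0 0 j] first_layer assms T0 j by simp
  ultimately show ?thesis
    using that j assms T0 first_layer by (simp add: rows_sub_Hsum_eq_layer_sum)
qed

lemma col_weight_stack_eq_column_sum:
  assumes "l \<le> L" "c < N*Z"
  shows "int (col_weight (rows_sub H (stack T l)) (length (stack T l)) c)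
    = (\<Sum>r<length T0. rows_sub (Hsum Z H S l) T0 r c)"
proof -
  have "int (col_weight (rows_sub H (T t)) (length (T t)) c) = (\<Sum>r<length T0. H (T t ! r) c)"
    if "t < l" for t
    using that assms layer_length layer_rows_binary
    by (subst col_weight_binary) (auto simp: rows_sub_def)
  then show ?thesis
    unfolding col_weight_stack of_nat_sum using assms
    by (simp add: rows_sub_Hsum_eq_layer_sum sum.swap[of _ "{..<l}"])
qed

lemma omega_stack_le_one_iff_column_sums:
  assumes "l \<le> L"
  shows "omega (rows_sub H (stack T l)) (length (stack T l)) (N*Z) \<le> 1
    \<longleftrightarrow> (\<forall>c<N*Z. (\<Sum>r<length T0. rows_sub (Hsum Z H S l) T0 r c) \<le> 1)"
proof -
  have "col_weight (rows_sub H (stack T l)) (length (stack T l)) c \<le> 1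
      \<longleftrightarrow> (\<Sum>r<length T0. rows_sub (Hsum Z H S l) T0 r c) \<le> 1" if "c < N*Z" for c
    using col_weight_stack_eq_column_sum[OF assms that] by linarith
  then show ?thesis
    unfolding omega_le_iff by blast
qed

end

theorem theorem1:
  fixes M N Z L S k :: nat and H :: "nat \<Rightarrow> nat \<Rightarrow> int" and T0 :: "nat list"
  assumes "0 < M" and "0 < N" and "0 < Z" and "1 < L"
    and "qc_matrix M N Z H"
    and "feasible M N Z L H S T0"
    and "1 \<le> k" and "k \<le> L - 1"
  shows "k \<le> layer_distance M N Z L H S T0 \<longleftrightarrow>
    ((\<forall>r<length T0. \<forall>c<N*Z. rows_sub (Hsum Z H S k) T0 r c \<in> {0,1}) \<and>
     omega (rows_sub (Hsum Z H S k) T0) (length T0) (N*Z) = 1)"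
proof -
  define T where "T = (SOME T. is_layers M N Z L H S T0 T)"
  have "is_layers M N Z L H S T0 T"
    unfolding T_def using assms(6) unfolding feasible_def by (metis someI_ex)
  then interpret qc_layers M N Z L H S T0 T
    using assms(5) by unfold_locales
  have k: "k < L"
    using assms(4,8) by simp
  define V where "V = rows_sub (Hsum Z H S k) T0"
  obtain j where nonzero: "0 < length T0" "j < N*Z" "V 0 j \<noteq> 0"
    using rows_sub_Hsum_first_row_nonzero[of k] T0_nonempty assms(1,3,7) k unfolding V_def by auto
  have "k \<le> layer_distance M N Z L H S T0
      \<longleftrightarrow> omega (rows_sub H (stack T k)) (length (stack T k)) (N*Z) \<le> 1"
    unfolding layer_distance_def Let_def T_def[symmetric] using k by (rule le_Greatest_stack_weight_iff)
  also have "\<dots> \<longleftrightarrow> (\<forall>c<N*Z. (\<Sum>r<length T0. V r c) \<le> 1)"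
    unfolding V_def using k by (intro omega_stack_le_one_iff_column_sums) simp
  also have "\<dots> \<longleftrightarrow> (\<forall>r<length T0. \<forall>c<N*Z. V r c \<in> {0,1}) \<and> omega V (length T0) (N*Z) = 1"
    using nonzero rows_sub_Hsum_nonneg k unfolding V_def
    by (intro column_sums_le_one_iff_binary_omega_one) auto
  finally show ?thesis
    unfolding V_def .
qed

end
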